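(* Let $z\in\mathbb C^d_\Delta$. The orbit $Az$ is closed in $\mathbb C^d_\Delta$ if and only if there exists a face $F$ of $\Delta$ such that $z\in(\mathbb C^* )^{F^c}$. Moreover, if $Az$ is not closed, then its closure in $\mathbb C^d_\Delta$ contains one and only one closed $A$-orbit.
   Context: Let $\mathfrak d$ be an $n$-dimensional real vector space, $\mathfrak d^*$ its dual. A quasilattice in $\mathfrak d$ is the $\mathbb Z$-submodule generated by a finite set of vectors spanning $\mathfrak d$. Let $\Delta\subset\mathfrak d^*$ be an $n$-dimensional convex polytope (not necessarily rational or simple) with $d$ facets, written as $\Delta=\bigcap_{j=1}^d\{\mu\in\mathfrak d^*:\langle\mu,X_j\rangle\ge\lambda_j\}$, where $X_1,\dots,X_d\in\mathfrak d$ are chosen inward-pointing normals to the facets and $\lambda_j\in\mathbb R$; let $Q$ be a quasilattice containing $X_1,\dots,X_d$. For each (relatively open) face $F$ of $\Delta$ let $I_F\subseteq\{1,\dots,d\}$ be such that $F=\{\mu\in\Delta:\langle\mu,X_j\rangle=\lambda_j\iff j\in I_F\}$ (the interior of $\Delta$ is the face with $I_F=\emptyset$). For $J\subseteq\{1,\dots,d\}$ and $\mathbb K\in\{\mathbb C,\mathbb C^*\}$ put $\mathbb K^J=\{z\in\mathbb C^d: z_j\in\mathbb K\ (j\in J),\ z_j=0\ (j\notin J)\}$; write $\mathbb K^F=\mathbb K^{I_F}$, $\mathbb K^{F^c}=\mathbb K^{\{1,\dots,d\}\setminus I_F}$, and $\mathbb C^F\times(\mathbb C^* )^{F^c}=\{z\in\mathbb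 C^d: z_j\ne0\text{ for all }j\notin I_F\}$. Let $\mathbb C^d_\Delta=\bigcup_F\mathbb C^F\times(\mathbb C^* )^{F^c}$, the union over all faces of $\Delta$ (an open subset of $\mathbb C^d$). Let $\pi:\mathbb R^d\to\mathfrak d$ be the linear map with $e_j\mapsto X_j$ and $\mathfrak n=\ker\pi$. Let $A=\{\exp(iY):Y\in\mathfrak n\}$, acting on $\mathbb C^d$ by $\exp(iY)\cdot z=(e^{-2\pi Y_1}z_1,\dots,e^{-2\pi Y_d}z_d)$. *)

theory Defs
  imports "HOL-Analysis.Analysis"
begin

text \<open>The space \<open>\<dd>\<close> is \<open>real ^ 'n\<close>; its dual is identified with \<open>real ^ 'n\<close> via the
  inner product, so \<open>\<langle>\<mu>,X\<rangle> = \<mu> \<bullet> X\<close>. Facets are indexed by the finite type \<open>'d\<close>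
  (so \<open>d = CARD('d)\<close>), and \<open>\<complex>^d\<close> is \<open>complex ^ 'd\<close>.\<close>

definition Delta :: "('d::finite \<Rightarrow> real ^ 'n::finite) \<Rightarrow> ('d \<Rightarrow> real) \<Rightarrow> (real ^ 'n) set" where
  "Delta X lam = {\<mu>. \<forall>j. \<mu> \<bullet> X j \<ge> lam j}"

definition polytope_presentation :: "('d::finite \<Rightarrow> real ^ 'n::finite) \<Rightarrow> ('d \<Rightarrow> real) \<Rightarrow> bool" where
  "polytope_presentation X lam \<longleftrightarrow>
     polytope (Delta X lam) \<and> aff_dim (Delta X lam) = int CARD('n) \<and>
     (\<forall>j. {\<mu> \<in> Delta X lam. \<mu> \<bullet> X j = lam j} facet_of Delta X lam) \<and>
     inj (\<lambda>j. {\<mu> \<in> Delta X lam. \<mu> \<bullet> X j = lam j}) \<and>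
     (\<forall>F. F facet_of Delta X lam \<longrightarrow> (\<exists>j. F = {\<mu> \<in> Delta X lam. \<mu> \<bullet> X j = lam j}))"

definition open_face :: "('d::finite \<Rightarrow> real ^ 'n::finite) \<Rightarrow> ('d \<Rightarrow> real) \<Rightarrow> 'd set \<Rightarrow> (real ^ 'n) set" where
  "open_face X lam I = {\<mu> \<in> Delta X lam. \<forall>j. \<mu> \<bullet> X j = lam j \<longleftrightarrow> j \<in> I}"

text \<open>\<open>I\<close> is the index set \<open>I_F\<close> of some face \<open>F\<close> of \<open>\<Delta>\<close>.\<close>
definition is_face_index :: "('d::finite \<Rightarrow> real ^ 'n::finite) \<Rightarrow> ('d \<Rightarrow> real) \<Rightarrow> 'd set \<Rightarrow> bool" where
  "is_face_index X lam I \<longleftrightarrow> open_face X lam I \<noteq> {}"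

definition CF_times_Cstar :: "'d::finite set \<Rightarrow> (complex ^ 'd) set" where
  "CF_times_Cstar I = {z. \<forall>j. j \<notin> I \<longrightarrow> z $ j \<noteq> 0}"

definition Cstar_compl :: "'d::finite set \<Rightarrow> (complex ^ 'd) set" where
  "Cstar_compl I = {z. (\<forall>j. j \<notin> I \<longrightarrow> z $ j \<noteq> 0) \<and> (\<forall>j. j \<in> I \<longrightarrow> z $ j = 0)}"

definition CdDelta :: "('d::finite \<Rightarrow> real ^ 'n::finite) \<Rightarrow> ('d \<Rightarrow> real) \<Rightarrow> (complex ^ 'd) set" where
  "CdDelta X lam = (\<Union>I \<in> {I. is_face_index X lam I}. CF_times_Cstar I)"

text \<open>\<open>\<nn> = ker \<pi>\<close>, \<open>\<pi>(e_j) = X_j\<close>.\<close>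
definition nfrak :: "('d::finite \<Rightarrow> real ^ 'n::finite) \<Rightarrow> (real ^ 'd) set" where
  "nfrak X = {Y. (\<Sum>j\<in>UNIV. Y $ j *\<^sub>R X j) = 0}"

text \<open>Action of \<open>exp(iY)\<close> on \<open>\<complex>^d\<close>.\<close>
definition act :: "real ^ 'd::finite \<Rightarrow> complex ^ 'd \<Rightarrow> complex ^ 'd" where
  "act Y z = (\<chi> j. complex_of_real (exp (- 2 * pi * Y $ j)) * z $ j)"

definition orbit :: "('d::finite \<Rightarrow> real ^ 'n::finite) \<Rightarrow> complex ^ 'd \<Rightarrow> (complex ^ 'd) set" where
  "orbit X z = (\<lambda>Y. act Y z) ` nfrak X"

end

theory Submission
  imports Defs
begin

(*
  Everything is governed by zero sets.  For mu in Delta write tight mu for the index set of the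
  face containing mu, and zeros z = {j. z_j = 0}; then z lies in C^d_Delta iff zeros z is contained
  in tight mu for some mu in Delta.  The proof rests on three ingredients, developed in this order:
  (1) a limit w of a sequence exp(i Y_k) z with the same zeros as z lies in the orbit of z, because
      the coordinates Y_k,j then converge (closedness of linear subspaces does the rest);
  (2) balancing: since sum_j Y_j (<mu,X_j> - lam_j) does not depend on mu for Y in n, a limit point
      w in C^d_Delta of the orbit of z satisfies zeros w \<subseteq> tight mu whenever zeros z \<subseteq> tight mu;
  (3) by Farkas' lemma, if mu minimises |tight mu| among the points with zeros z \<subseteq> tight mu, some
      Y in n is supported on tight mu and positive on tight mu - zeros z; flowing along Y kills exactly
      the coordinates in tight mu, producing a point of the closure whose zero set is a face index.
  From these: the orbit of z is closed in C^d_Delta iff zeros z is a face index, and the closure of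
  every orbit contains exactly one closed orbit, namely that of the truncation constructed in (3).
*)

section \<open>Zero sets, faces and the group action\<close>

definition tight :: "('d::finite \<Rightarrow> real ^ 'n::finite) \<Rightarrow> ('d \<Rightarrow> real) \<Rightarrow> real ^ 'n \<Rightarrow> 'd set" where
  "tight X lam \<mu> = {j. \<mu> \<bullet> X j = lam j}"

definition zeros :: "complex ^ 'd::finite \<Rightarrow> 'd set" where
  "zeros z = {j. z $ j = 0}"

definition truncate :: "'d::finite set \<Rightarrow> complex ^ 'd \<Rightarrow> complex ^ 'd" where
  "truncate I z = (\<chi> j. if j \<in> I then 0 else z $ j)"

lemma zeros_truncate: "zeros (truncate I z) = I \<union> zeros z"
  by (auto simp: zeros_def truncate_def)

lemma face_index_iff: "is_face_index X lam I \<longleftrightarrow> (\<exists>\<mu>\<in>Delta X lam. tight X lam \<mu> = I)"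
  by (auto simp: is_face_index_def open_face_def tight_def)

lemma CdDelta_iff: "z \<in> CdDelta X lam \<longleftrightarrow> (\<exists>\<mu>\<in>Delta X lam. zeros z \<subseteq> tight X lam \<mu>)"
  by (auto simp: CdDelta_def face_index_iff CF_times_Cstar_def tight_def zeros_def)

lemma Cstar_compl_iff: "z \<in> Cstar_compl I \<longleftrightarrow> zeros z = I"
  by (auto simp: Cstar_compl_def zeros_def)

lemma act_nth: "act Y z $ j = complex_of_real (exp (- 2 * pi * Y $ j)) * z $ j"
  by (simp add: act_def)

lemma zeros_act [simp]: "zeros (act Y z) = zeros z"
  by (simp add: zeros_def act_def)

lemma act_act: "act Y1 (act Y2 z) = act (Y1 + Y2) z"
proof -
  have "exp (- 2 * pi * (a + b)) = exp (- 2 * pi * a) * exp (- 2 * pi * b)" for a b :: real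
    by (simp add: exp_add[symmetric] algebra_simps)
  then show ?thesis by (simp add: act_def vec_eq_iff)
qed

lemma act_0: "act 0 z = z"
  by (simp add: act_def vec_eq_iff)

lemma continuous_on_act: "continuous_on S (act Y)"
  unfolding act_def by (intro continuous_intros)

definition pi_map :: "('d::finite \<Rightarrow> 'a::real_vector) \<Rightarrow> real ^ 'd \<Rightarrow> 'a" where
  "pi_map X Y = (\<Sum>j\<in>UNIV. Y $ j *\<^sub>R X j)"

lemma linear_pi_map: "linear (pi_map X)"
  unfolding pi_map_def by (rule linearI) (auto simp: sum.distrib scaleR_add_left scaleR_right.sum)

lemma pi_map_axis: "pi_map X (axis j c) = c *\<^sub>R X j"
proof -
  have "axis j c $ i *\<^sub>R X i = (if i = j then c *\<^sub>R X j else 0)" for i by (simp add: axis_def)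
  then show ?thesis unfolding pi_map_def by simp
qed

lemma nfrak_pi_map: "nfrak X = {Y. pi_map X Y = 0}"
  by (simp add: nfrak_def pi_map_def)

lemma subspace_nfrak: "subspace (nfrak X)"
  unfolding nfrak_pi_map by (rule linear_subspace_kernel[OF linear_pi_map])

lemma nfrak_slack_sum:
  assumes "Y \<in> nfrak X"
  shows "(\<Sum>j\<in>UNIV. Y $ j * (\<mu> \<bullet> X j - lam j)) = - (\<Sum>j\<in>UNIV. Y $ j * lam j)"
proof -
  have "(\<Sum>j\<in>UNIV. Y $ j * (\<mu> \<bullet> X j)) = \<mu> \<bullet> (\<Sum>j\<in>UNIV. Y $ j *\<^sub>R X j)"
    by (simp add: inner_sum_right)
  also have "\<dots> = 0" using assms by (simp add: nfrak_def)
  finally show ?thesis by (simp add: right_diff_distrib sum_subtractf)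
qed

lemma orbit_refl: "z \<in> orbit X z"
  unfolding orbit_def using subspace_0[OF subspace_nfrak] act_0 by (metis image_eqI)

lemma orbit_eq: assumes "w \<in> orbit X z" shows "orbit X w = orbit X z"
proof -
  obtain Y where Y: "Y \<in> nfrak X" "w = act Y z" using assms by (auto simp: orbit_def)
  show ?thesis
  proof
    show "orbit X w \<subseteq> orbit X z"
      using Y subspace_add[OF subspace_nfrak] by (auto simp: orbit_def act_act)
    show "orbit X z \<subseteq> orbit X w"
    proof
      fix u assume "u \<in> orbit X z"
      then obtain Z where Z: "Z \<in> nfrak X" "u = act Z z" by (auto simp: orbit_def)
      then have "u = act (Z - Y) w" using Y by (simp add: act_act)
      moreover have "Z - Y \<in> nfrak X" using Y Z subspace_diff[OF subspace_nfrak] by blast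
      ultimately show "u \<in> orbit X w" unfolding orbit_def by blast
    qed
  qed
qed

lemma zeros_orbit: "w \<in> orbit X z \<Longrightarrow> zeros w = zeros z"
  by (auto simp: orbit_def)

lemma orbit_in_CdDelta: "z \<in> CdDelta X lam \<Longrightarrow> orbit X z \<subseteq> CdDelta X lam"
  using zeros_orbit by (metis CdDelta_iff subsetI)


section \<open>Coordinates along a convergent sequence of group elements\<close>

lemma coord_ratio:
  assumes lim: "(\<lambda>k. act (Y k) z) \<longlonglongrightarrow> w" and nz: "z $ j \<noteq> 0"
  shows "(\<lambda>k. exp (- 2 * pi * Y k $ j)) \<longlonglongrightarrow> cmod (w $ j) / cmod (z $ j)"
    and "w $ j = complex_of_real (cmod (w $ j) / cmod (z $ j)) * z $ j"
proof -
  have lim_j: "(\<lambda>k. act (Y k) z $ j) \<longlonglongrightarrow> w $ j" using lim by (rule tendsto_vec_nth)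
  then have "(\<lambda>k. cmod (act (Y k) z $ j) / cmod (z $ j)) \<longlonglongrightarrow> cmod (w $ j) / cmod (z $ j)"
    by (intro tendsto_divide tendsto_norm tendsto_const) (use nz in auto)
  moreover have "cmod (act (Y k) z $ j) / cmod (z $ j) = exp (- 2 * pi * Y k $ j)" for k
    using nz by (simp add: act_nth norm_mult)
  ultimately show ratio: "(\<lambda>k. exp (- 2 * pi * Y k $ j)) \<longlonglongrightarrow> cmod (w $ j) / cmod (z $ j)"
    by simp
  have "(\<lambda>k. act (Y k) z $ j) \<longlonglongrightarrow> complex_of_real (cmod (w $ j) / cmod (z $ j)) * z $ j"
    unfolding act_nth by (intro tendsto_intros ratio)
  then show "w $ j = complex_of_real (cmod (w $ j) / cmod (z $ j)) * z $ j"
    using lim_j LIMSEQ_unique by blast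
qed

lemma coord_zero:
  assumes lim: "(\<lambda>k. act (Y k) z) \<longlonglongrightarrow> w" and z: "z $ j = 0"
  shows "w $ j = 0"
proof -
  have "(\<lambda>k. act (Y k) z $ j) \<longlonglongrightarrow> w $ j" using lim by (rule tendsto_vec_nth)
  moreover have "(\<lambda>k. act (Y k) z $ j) = (\<lambda>k. 0)" using z by (simp add: act_nth)
  ultimately show ?thesis using LIMSEQ_unique tendsto_const by metis
qed

lemma coord_tendsto:
  assumes lim: "(\<lambda>k. act (Y k) z) \<longlonglongrightarrow> w" and nz: "z $ j \<noteq> 0" and nw: "w $ j \<noteq> 0"
  shows "(\<lambda>k. Y k $ j) \<longlonglongrightarrow> - ln (cmod (w $ j) / cmod (z $ j)) / (2 * pi)"
proof -
  have "(\<lambda>k. - ln (exp (- 2 * pi * Y k $ j)) / (2 * pi))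
          \<longlonglongrightarrow> - ln (cmod (w $ j) / cmod (z $ j)) / (2 * pi)"
    using coord_ratio(1)[OF lim nz] nz nw by (intro tendsto_intros) auto
  then show ?thesis by simp
qed

lemma coord_at_top:
  assumes lim: "(\<lambda>k. act (Y k) z) \<longlonglongrightarrow> w" and nz: "z $ j \<noteq> 0" and w: "w $ j = 0"
  shows "filterlim (\<lambda>k. Y k $ j) at_top sequentially"
  unfolding filterlim_at_top
proof
  fix M :: real
  have "eventually (\<lambda>k. exp (- 2 * pi * Y k $ j) < exp (- 2 * pi * M)) sequentially"
    using order_tendstoD(2)[OF coord_ratio(1)[OF lim nz], of "exp (- 2 * pi * M)"] w by simp
  then show "eventually (\<lambda>k. M \<le> Y k $ j) sequentially"
    by (rule eventually_mono) (simp add: mult_le_cancel_left_pos)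
qed

lemma coord_bounded_below:
  assumes lim: "(\<lambda>k. act (Y k) z) \<longlonglongrightarrow> w" and nz: "z $ j \<noteq> 0"
  shows "\<exists>B. eventually (\<lambda>k. B \<le> Y k $ j) sequentially"
proof (cases "w $ j = 0")
  case True
  then show ?thesis using coord_at_top[OF lim nz True] unfolding filterlim_at_top by blast
next
  case False
  define L where "L = - ln (cmod (w $ j) / cmod (z $ j)) / (2 * pi)"
  have "eventually (\<lambda>k. L - 1 < Y k $ j) sequentially"
    using order_tendstoD(1)[OF coord_tendsto[OF lim nz False], of "L - 1"] by (simp add: L_def)
  then have "eventually (\<lambda>k. L - 1 \<le> Y k $ j) sequentially"
    by (rule eventually_mono) simp
  then show ?thesis by blast
qed


section \<open>Limits of orbit points\<close>

lemma closure_orbit_sequence: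
  assumes "w \<in> closure (orbit X z)"
  obtains Y where "\<And>k. Y k \<in> nfrak X" "(\<lambda>k. act (Y k) z) \<longlonglongrightarrow> w"
proof -
  obtain u where u: "\<And>k. u k \<in> orbit X z" "u \<longlonglongrightarrow> w"
    using assms closure_sequential by metis
  then have "\<forall>k. \<exists>Y. Y \<in> nfrak X \<and> u k = act Y z" by (auto simp: orbit_def)
  then obtain Y where Y: "\<And>k. Y k \<in> nfrak X" "\<And>k. u k = act (Y k) z" by metis
  have "(\<lambda>k. act (Y k) z) = u" using Y(2) by (simp add: fun_eq_iff)
  then show ?thesis using that[of Y] Y(1) u(2) by blast
qed

text \<open>The coordinates \<open>Y_k,j\<close> with \<open>z_j \<noteq> 0\<close> converge; their limit is the projection of a point of
  the closed subspace \<open>\<nn>\<close>, and that point moves \<open>z\<close> to \<open>w\<close>.\<close>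
lemma limit_in_orbit:
  assumes Y: "\<And>k. Y k \<in> nfrak X" and lim: "(\<lambda>k. act (Y k) z) \<longlonglongrightarrow> w"
    and keep: "zeros w \<subseteq> zeros z"
  shows "w \<in> orbit X z"
proof -
  have nw: "w $ j \<noteq> 0" if "z $ j \<noteq> 0" for j using keep that by (auto simp: zeros_def)
  define P where "P = (\<lambda>V::real^'a. \<chi> j. if z $ j \<noteq> 0 then V $ j else 0)"
  have linP: "linear P" unfolding P_def by (rule linearI) (auto simp: vec_eq_iff)
  define a where "a = (\<chi> j. if z $ j \<noteq> 0 then - ln (cmod (w $ j) / cmod (z $ j)) / (2 * pi) else 0)"
  have "(\<lambda>k. P (Y k)) \<longlonglongrightarrow> a"
  proof (rule vec_tendstoI)
    fix j
    show "(\<lambda>k. P (Y k) $ j) \<longlonglongrightarrow> a $ j"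
      using coord_tendsto[OF lim _ nw] by (cases "z $ j = 0") (simp_all add: P_def a_def)
  qed
  moreover have "closed (P ` nfrak X)"
    by (intro closed_subspace linear_subspace_image[OF linP] subspace_nfrak)
  ultimately have "a \<in> P ` nfrak X"
    using Y closed_sequential_limits by (metis image_eqI)
  then obtain Y' where Y': "Y' \<in> nfrak X" "a = P Y'" by auto
  have "w $ j = act Y' z $ j" for j
  proof (cases "z $ j = 0")
    case True
    then show ?thesis using coord_zero[OF lim True] by (simp add: act_nth)
  next
    case False
    define c where "c = cmod (w $ j) / cmod (z $ j)"
    have "c > 0" using False nw[OF False] by (simp add: c_def)
    moreover have "Y' $ j = - ln c / (2 * pi)"
      using arg_cong[OF Y'(2), of "\<lambda>v. v $ j"] False by (simp add: P_def a_def c_def)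
    ultimately have "exp (- 2 * pi * Y' $ j) = c" by simp
    then show ?thesis using coord_ratio(2)[OF lim False] by (simp add: act_nth c_def)
  qed
  then show ?thesis using Y'(1) by (auto simp: orbit_def vec_eq_iff)
qed

lemma zeros_closure_orbit:
  assumes "w \<in> closure (orbit X z)"
  shows "zeros z \<subseteq> zeros w"
proof -
  obtain Y where "(\<lambda>k. act (Y k) z) \<longlonglongrightarrow> w" using closure_orbit_sequence[OF assms] by blast
  then show ?thesis using coord_zero by (auto simp: zeros_def)
qed

lemma closure_orbit_truncate:
  assumes "w \<in> closure (orbit X z)"
  shows "w \<in> orbit X (truncate (zeros w) z)"
proof -
  obtain Y where Y: "\<And>k. Y k \<in> nfrak X" and lim: "(\<lambda>k. act (Y k) z) \<longlonglongrightarrow> w"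
    using closure_orbit_sequence[OF assms] by blast
  have "(\<lambda>k. act (Y k) (truncate (zeros w) z)) \<longlonglongrightarrow> w"
  proof (rule vec_tendstoI)
    fix j
    show "(\<lambda>k. act (Y k) (truncate (zeros w) z) $ j) \<longlonglongrightarrow> w $ j"
      using tendsto_vec_nth[OF lim, of j]
      by (cases "w $ j = 0") (simp_all add: act_nth truncate_def zeros_def)
  qed
  then show ?thesis
    by (rule limit_in_orbit[OF Y]) (simp add: zeros_truncate)
qed

lemma orbit_subset_closure:
  assumes "w \<in> closure (orbit X z)"
  shows "orbit X w \<subseteq> closure (orbit X z)"
proof
  fix u assume "u \<in> orbit X w"
  then obtain Y where Y: "Y \<in> nfrak X" "u = act Y w" by (auto simp: orbit_def)
  have "act Y ` orbit X z \<subseteq> orbit X z"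
  proof
    fix v assume "v \<in> act Y ` orbit X z"
    then obtain Z where "Z \<in> nfrak X" "v = act (Y + Z) z" by (auto simp: orbit_def act_act)
    moreover have "Y + Z \<in> nfrak X" using Y(1) \<open>Z \<in> nfrak X\<close> subspace_add[OF subspace_nfrak] by blast
    ultimately show "v \<in> orbit X z" by (auto simp: orbit_def)
  qed
  then have "act Y ` closure (orbit X z) \<subseteq> closure (orbit X z)"
    using closure_subset by (intro image_closure_subset continuous_on_act) auto
  then show "u \<in> closure (orbit X z)" using Y assms by blast
qed

lemma closedin_subspace_iff: "closedin (top_of_set U) S \<longleftrightarrow> S \<subseteq> U \<and> U \<inter> closure S \<subseteq> S"
proof
  assume "closedin (top_of_set U) S"
  then obtain T where T: "closed T" "S = U \<inter> T" by (auto simp: closedin_closed)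
  then have "closure S \<subseteq> T" by (simp add: closure_minimal)
  then show "S \<subseteq> U \<and> U \<inter> closure S \<subseteq> S" using T by auto
next
  assume "S \<subseteq> U \<and> U \<inter> closure S \<subseteq> S"
  then have "S = U \<inter> closure S" using closure_subset by blast
  then show "closedin (top_of_set U) S"
    unfolding closedin_closed by (intro exI[of _ "closure S"]) simp
qed


section \<open>Balancing: limit points stay in the face of the starting point\<close>

lemma sum_filterlim_at_top:
  fixes f :: "'i \<Rightarrow> 'a \<Rightarrow> real"
  assumes S: "finite S" "i0 \<in> S" and top: "filterlim (f i0) at_top F"
    and below: "\<And>i. i \<in> S \<Longrightarrow> \<exists>B. eventually (\<lambda>x. B \<le> f i x) F"
  shows "filterlim (\<lambda>x. \<Sum>i\<in>S. f i x) at_top F"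
proof -
  have "\<forall>i\<in>S. \<exists>B. eventually (\<lambda>x. B \<le> f i x) F" using below by blast
  from bchoice[OF this] obtain B where "\<forall>i\<in>S. eventually (\<lambda>x. B i \<le> f i x) F"
    by blast
  then have "eventually (\<lambda>x. \<forall>i\<in>S - {i0}. B i \<le> f i x) F"
    using S by (intro eventually_ball_finite) auto
  then have "eventually (\<lambda>x. (\<Sum>i\<in>S - {i0}. B i) + f i0 x \<le> (\<Sum>i\<in>S. f i x)) F"
    by (rule eventually_mono) (auto simp: sum.remove[OF S] intro!: sum_mono)
  moreover have "filterlim (\<lambda>x. (\<Sum>i\<in>S - {i0}. B i) + f i0 x) at_top F"
    by (rule filterlim_tendsto_add_at_top[OF tendsto_const top])
  ultimately show ?thesis by (rule filterlim_at_top_mono[rotated])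
qed

lemma not_tendsto_at_top:
  fixes f :: "nat \<Rightarrow> real"
  assumes "f \<longlonglongrightarrow> c" shows "\<not> filterlim f at_top sequentially"
proof
  assume "filterlim f at_top sequentially"
  then have "eventually (\<lambda>k. c + 1 \<le> f k) sequentially" by (simp add: filterlim_at_top)
  moreover have "eventually (\<lambda>k. f k < c + 1) sequentially"
    using order_tendstoD(2)[OF assms] by simp
  ultimately have "eventually (\<lambda>k. False) sequentially" by eventually_elim simp
  then show False by simp
qed

text \<open>Write \<open>m_j = \<langle>\<mu>,X_j\<rangle> - \<lambda>_j\<close> and \<open>p_j = \<langle>\<nu>,X_j\<rangle> - \<lambda>_j\<close>, both \<open>\<ge> 0\<close>.  For
  \<open>Y \<in> \<nn>\<close> we have \<open>\<Sum>_j Y_j m_j = \<Sum>_j Y_j p_j\<close>.  Along \<open>Y_k\<close> the right side converges (a coordinate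
  with \<open>p_j > 0\<close> survives in \<open>w\<close>), while if some \<open>j\<close> with \<open>m_j > 0\<close> were killed in \<open>w\<close>, the left side
  would tend to \<open>+\<infinity>\<close> (all terms with \<open>m_j > 0\<close> are bounded below, that one is unbounded).\<close>
lemma limit_zeros_in_face:
  fixes X :: "'d::finite \<Rightarrow> real ^ 'n::finite"
  assumes Y: "\<And>k. Y k \<in> nfrak X" and lim: "(\<lambda>k. act (Y k) z) \<longlonglongrightarrow> w"
    and mu: "\<mu> \<in> Delta X lam" "zeros z \<subseteq> tight X lam \<mu>"
    and nu: "\<nu> \<in> Delta X lam" "zeros w \<subseteq> tight X lam \<nu>"
  shows "zeros w \<subseteq> tight X lam \<mu>"
proof
  fix j0 assume j0: "j0 \<in> zeros w"
  define m where "m j = \<mu> \<bullet> X j - lam j" for j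
  define p where "p j = \<nu> \<bullet> X j - lam j" for j
  have m_pos: "m j > 0" if "m j \<noteq> 0" for j
    using mu(1) that by (simp add: m_def Delta_def less_le)
  have z_nz: "z $ j \<noteq> 0" if "m j \<noteq> 0" for j
    using mu(2) that by (auto simp: m_def zeros_def tight_def)
  have w_nz: "w $ j \<noteq> 0" if "p j \<noteq> 0" for j
    using nu(2) that by (auto simp: p_def zeros_def tight_def)
  have balance: "(\<Sum>j\<in>UNIV. m j * Y k $ j) = (\<Sum>j\<in>UNIV. p j * Y k $ j)" for k
    using nfrak_slack_sum[OF Y[of k], of \<mu> lam] nfrak_slack_sum[OF Y[of k], of \<nu> lam]
    by (simp add: m_def p_def mult.commute)
  have "(\<lambda>k. p j * Y k $ j) \<longlonglongrightarrow> p j * (- ln (cmod (w $ j) / cmod (z $ j)) / (2 * pi))" for j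
  proof (cases "p j = 0")
    case False
    then have "z $ j \<noteq> 0" using w_nz coord_zero[OF lim] by blast
    then show ?thesis by (intro tendsto_mult_left coord_tendsto[OF lim _ w_nz[OF False]])
  qed simp
  then have rhs: "(\<lambda>k. \<Sum>j\<in>UNIV. p j * Y k $ j)
          \<longlonglongrightarrow> (\<Sum>j\<in>UNIV. p j * (- ln (cmod (w $ j) / cmod (z $ j)) / (2 * pi)))"
    by (rule tendsto_sum)
  have lhs: "filterlim (\<lambda>k. \<Sum>j\<in>UNIV. m j * Y k $ j) at_top sequentially"
    if "j0 \<notin> tight X lam \<mu>"
  proof (rule sum_filterlim_at_top)
    have m0: "m j0 \<noteq> 0" using that by (simp add: m_def tight_def)
    moreover have "w $ j0 = 0" using j0 by (simp add: zeros_def)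
    ultimately have "filterlim (\<lambda>k. Y k $ j0) at_top sequentially"
      by (intro coord_at_top[OF lim z_nz])
    then show "filterlim (\<lambda>k. m j0 * Y k $ j0) at_top sequentially"
      by (rule filterlim_tendsto_pos_mult_at_top[OF tendsto_const m_pos[OF m0]])
    show "\<exists>B. eventually (\<lambda>k. B \<le> m j * Y k $ j) sequentially" for j
    proof (cases "m j = 0")
      case False
      then obtain B where "eventually (\<lambda>k. B \<le> Y k $ j) sequentially"
        using coord_bounded_below[OF lim z_nz] by blast
      then have "eventually (\<lambda>k. m j * B \<le> m j * Y k $ j) sequentially"
        by (rule eventually_mono) (use m_pos[OF False] in simp)
      then show ?thesis by blast
    qed (auto intro!: exI[of _ 0])
  qed simp_all
  show "j0 \<in> tight X lam \<mu>"
    using lhs not_tendsto_at_top[OF rhs] by (simp only: balance) blast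
qed


section \<open>Convex geometry: directions in \<open>\<nn>\<close> that push a point into a smaller face\<close>

lemma farkas_cone:
  fixes v :: "'a::euclidean_space"
  assumes S: "finite S" and v: "v \<notin> convex_cone hull S"
  obtains a where "a \<bullet> v < 0" "\<And>x. x \<in> S \<Longrightarrow> 0 \<le> a \<bullet> x"
proof -
  let ?C = "convex_cone hull S"
  have "closed ?C" by (rule polyhedron_imp_closed, rule polyhedron_convex_cone_hull[OF S])
  then obtain a b where ab: "a \<bullet> v < b" "\<forall>x\<in>?C. b < a \<bullet> x"
    using separating_hyperplane_closed_point[OF convex_convex_cone_hull _ v] by blast
  have b0: "b < 0" using ab(2) convex_cone_hull_contains_0[of S] by force
  have "0 \<le> a \<bullet> x" if "x \<in> ?C" for x
  proof (rule ccontr)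
    assume "\<not> 0 \<le> a \<bullet> x"
    then have neg: "a \<bullet> x < 0" by simp
    have "(b / (a \<bullet> x)) *\<^sub>R x \<in> ?C"
      using convex_cone_hull_mul[OF that] neg b0 by (simp add: divide_nonpos_neg)
    then have "b < a \<bullet> ((b / (a \<bullet> x)) *\<^sub>R x)" using ab(2) by blast
    then show False using neg by simp
  qed
  then show ?thesis using that ab(1) b0 hull_subset[of S] by force
qed

lemma perturb_in_Delta:
  fixes X :: "'d::finite \<Rightarrow> real ^ 'n::finite"
  assumes mu: "\<mu> \<in> Delta X lam" and a: "\<And>j. j \<in> tight X lam \<mu> \<Longrightarrow> 0 \<le> a \<bullet> X j"
  obtains e where "e > 0" "\<mu> + e *\<^sub>R a \<in> Delta X lam"
    "tight X lam (\<mu> + e *\<^sub>R a) = {j \<in> tight X lam \<mu>. a \<bullet> X j = 0}"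
proof -
  have "\<forall>j. \<forall>\<^sub>F e in at_right 0. j \<notin> tight X lam \<mu> \<longrightarrow> lam j < \<mu> \<bullet> X j + e * (a \<bullet> X j)"
  proof
    fix j
    show "\<forall>\<^sub>F e in at_right 0. j \<notin> tight X lam \<mu> \<longrightarrow> lam j < \<mu> \<bullet> X j + e * (a \<bullet> X j)"
    proof (cases "j \<in> tight X lam \<mu>")
      case False
      then have "lam j < \<mu> \<bullet> X j + 0 * (a \<bullet> X j)"
        using mu by (auto simp: tight_def Delta_def less_le)
      moreover have "((\<lambda>e. \<mu> \<bullet> X j + e * (a \<bullet> X j)) \<longlongrightarrow> \<mu> \<bullet> X j + 0 * (a \<bullet> X j)) (at_right 0)"
        by (intro tendsto_intros)
      ultimately have "\<forall>\<^sub>F e in at_right 0. lam j < \<mu> \<bullet> X j + e * (a \<bullet> X j)"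
        using order_tendstoD(1) by blast
      then show ?thesis by (rule eventually_mono) simp
    qed simp
  qed
  then have "\<forall>\<^sub>F e in at_right 0. \<forall>j. j \<notin> tight X lam \<mu> \<longrightarrow> lam j < \<mu> \<bullet> X j + e * (a \<bullet> X j)"
    by (intro eventually_all_finite) blast
  then have "\<forall>\<^sub>F e in at_right (0::real). e > 0 \<and>
               (\<forall>j. j \<notin> tight X lam \<mu> \<longrightarrow> lam j < \<mu> \<bullet> X j + e * (a \<bullet> X j))"
    by (rule eventually_conj[OF eventually_at_right_less])
  then obtain e :: real where e: "e > 0"
    and off: "\<And>j. j \<notin> tight X lam \<mu> \<Longrightarrow> lam j < \<mu> \<bullet> X j + e * (a \<bullet> X j)"
    using eventually_happens[of _ "at_right (0::real)"] trivial_limit_at_right_real by blast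
  have slack: "(\<mu> + e *\<^sub>R a) \<bullet> X j = \<mu> \<bullet> X j + e * (a \<bullet> X j)" for j
    by (simp add: inner_add_left)
  have on: "\<mu> \<bullet> X j = lam j" if "j \<in> tight X lam \<mu>" for j using that by (simp add: tight_def)
  show ?thesis
  proof
    have "lam j \<le> (\<mu> + e *\<^sub>R a) \<bullet> X j" for j
      using on[of j] a[of j] off[of j] e unfolding slack by (cases "j \<in> tight X lam \<mu>") auto
    then show "\<mu> + e *\<^sub>R a \<in> Delta X lam" by (simp add: Delta_def)
    have "(\<mu> + e *\<^sub>R a) \<bullet> X j = lam j \<longleftrightarrow> j \<in> tight X lam \<mu> \<and> a \<bullet> X j = 0" for j
      using on[of j] off[of j] e unfolding slack by (cases "j \<in> tight X lam \<mu>") auto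
    then show "tight X lam (\<mu> + e *\<^sub>R a) = {j \<in> tight X lam \<mu>. a \<bullet> X j = 0}"
      by (auto simp: tight_def)
  qed (rule e)
qed

text \<open>A point \<open>\<mu> \<in> \<Delta>\<close> at which the facets in \<open>J\<close> are tight and which lies in a face of minimal
  codimension among such points, i.e. in the smallest face of \<open>\<Delta>\<close> meeting all facets of \<open>J\<close>.\<close>
definition minimal_face_point ::
    "('d::finite \<Rightarrow> real ^ 'n::finite) \<Rightarrow> ('d \<Rightarrow> real) \<Rightarrow> 'd set \<Rightarrow> real ^ 'n \<Rightarrow> bool" where
  "minimal_face_point X lam J \<mu> \<longleftrightarrow> \<mu> \<in> Delta X lam \<and> J \<subseteq> tight X lam \<mu> \<and>
     (\<forall>\<nu>\<in>Delta X lam. J \<subseteq> tight X lam \<nu> \<longrightarrow> card (tight X lam \<mu>) \<le> card (tight X lam \<nu>))"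

lemma minimal_face_point_exists:
  assumes "\<nu> \<in> Delta X lam" "J \<subseteq> tight X lam \<nu>"
  obtains \<mu> where "minimal_face_point X lam J \<mu>"
  using ex_has_least_nat[of "\<lambda>\<nu>. \<nu> \<in> Delta X lam \<and> J \<subseteq> tight X lam \<nu>" \<nu> "\<lambda>\<nu>. card (tight X lam \<nu>)"]
    assms that unfolding minimal_face_point_def by blast

lemma signed_cone_in_pi_image:
  fixes X :: "'d::finite \<Rightarrow> 'a::real_vector"
  assumes JI: "J \<subseteq> I"
  shows "convex_cone hull (X ` (I - J) \<union> X ` J \<union> (\<lambda>j. - X j) ` J)
           \<subseteq> pi_map X ` {Y. (\<forall>j. j \<notin> I \<longrightarrow> Y $ j = 0) \<and> (\<forall>j\<in>I - J. 0 \<le> Y $ j)}"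
proof -
  define K where "K = {Y :: real ^ 'd. (\<forall>j. j \<notin> I \<longrightarrow> Y $ j = 0) \<and> (\<forall>j\<in>I - J. 0 \<le> Y $ j)}"
  have "X j \<in> pi_map X ` K" if "j \<in> I" for j
  proof -
    have "axis j 1 \<in> K" using that by (auto simp: K_def axis_def)
    then show ?thesis using pi_map_axis[of X j 1] by (metis image_eqI scaleR_one)
  qed
  moreover have "- X j \<in> pi_map X ` K" if "j \<in> J" for j
  proof -
    have "axis j (-1) \<in> K" using that JI by (auto simp: K_def axis_def)
    then show ?thesis using pi_map_axis[of X j "-1"] by (metis image_eqI scaleR_minus1_left)
  qed
  ultimately have "X ` (I - J) \<union> X ` J \<union> (\<lambda>j. - X j) ` J \<subseteq> pi_map X ` K" using JI by auto
  moreover have "convex_cone K" unfolding convex_cone_iff K_def by auto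
  then have "convex_cone (pi_map X ` K)" using convex_cone_linear_image linear_pi_map by blast
  ultimately show ?thesis unfolding K_def by (rule hull_minimal)
qed

text \<open>Let \<open>I\<close> be the face index of a minimal face point and
  \<open>k \<in> I - J\<close>.  Either \<open>-X_k\<close> lies in the cone of \<open>signed_cone_in_pi_image\<close>, which yields a vector of
  \<open>\<nn>\<close> with the required signs, or Farkas' lemma gives a direction leading to a point of \<open>\<Delta>\<close> with
  fewer tight facets, still containing \<open>J\<close>, contradicting minimality.\<close>
lemma minimal_face_direction:
  fixes X :: "'d::finite \<Rightarrow> real ^ 'n::finite"
  assumes min: "minimal_face_point X lam J \<mu>" and k: "k \<in> tight X lam \<mu> - J"
  shows "\<exists>Y\<in>nfrak X. (\<forall>j. j \<notin> tight X lam \<mu> \<longrightarrow> Y $ j = 0) \<and>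
           (\<forall>j\<in>tight X lam \<mu> - J. 0 \<le> Y $ j) \<and> 0 < Y $ k"
proof -
  define I where "I = tight X lam \<mu>"
  have mu: "\<mu> \<in> Delta X lam" and JI: "J \<subseteq> I" using min by (auto simp: minimal_face_point_def I_def)
  define S where "S = X ` (I - J) \<union> X ` J \<union> (\<lambda>j. - X j) ` J"
  show ?thesis
  proof (cases "- X k \<in> convex_cone hull S")
    case True
    then obtain Y where Y: "\<forall>j. j \<notin> I \<longrightarrow> Y $ j = 0" "\<forall>j\<in>I - J. 0 \<le> Y $ j" "- X k = pi_map X Y"
      using signed_cone_in_pi_image[OF JI, of X] unfolding S_def by blast
    have "pi_map X (Y + axis k 1) = pi_map X Y + X k"
      unfolding linear_add[OF linear_pi_map] pi_map_axis by simp
    also have "\<dots> = 0" by (simp add: Y(3)[symmetric])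
    finally have in_n: "Y + axis k 1 \<in> nfrak X" by (simp add: nfrak_pi_map)
    have "0 \<le> Y $ k" using Y(2) k by (simp add: I_def)
    then have "0 < (Y + axis k 1) $ k" by (simp add: axis_def)
    then show ?thesis using in_n Y(1,2) k
      by (intro bexI[of _ "Y + axis k 1"]) (auto simp: axis_def I_def)
  next
    case False
    then obtain a where ak: "a \<bullet> (- X k) < 0" and aS: "\<And>x. x \<in> S \<Longrightarrow> 0 \<le> a \<bullet> x"
      using farkas_cone[OF _ False] unfolding S_def by auto
    have aJ: "a \<bullet> X j = 0" if "j \<in> J" for j
      using aS[of "X j"] aS[of "- X j"] that unfolding S_def by force
    have aI: "0 \<le> a \<bullet> X j" if "j \<in> I" for j
      using aS[of "X j"] that unfolding S_def by blast
    obtain e where nu: "\<mu> + e *\<^sub>R a \<in> Delta X lam"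
      and tight_nu: "tight X lam (\<mu> + e *\<^sub>R a) = {j \<in> I. a \<bullet> X j = 0}"
      using perturb_in_Delta[OF mu aI[unfolded I_def]] unfolding I_def by blast
    have "J \<subseteq> tight X lam (\<mu> + e *\<^sub>R a)" using tight_nu JI aJ by auto
    then have "card I \<le> card (tight X lam (\<mu> + e *\<^sub>R a))"
      using min nu by (auto simp: minimal_face_point_def I_def)
    also have "\<dots> \<le> card (I - {k})" unfolding tight_nu using ak by (intro card_mono) auto
    also have "\<dots> < card I" using k by (intro card_Diff1_less) (auto simp: I_def)
    finally show ?thesis by simp
  qed
qed

lemma minimal_face_flow:
  fixes X :: "'d::finite \<Rightarrow> real ^ 'n::finite"
  assumes min: "minimal_face_point X lam J \<mu>"
  obtains Y where "Y \<in> nfrak X" "\<And>j. j \<notin> tight X lam \<mu> \<Longrightarrow> Y $ j = 0"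
    "\<And>j. j \<in> tight X lam \<mu> - J \<Longrightarrow> 0 < Y $ j"
proof -
  define D where "D = tight X lam \<mu> - J"
  have "\<forall>k\<in>D. \<exists>Y. Y \<in> nfrak X \<and> (\<forall>j. j \<notin> tight X lam \<mu> \<longrightarrow> Y $ j = 0) \<and>
           (\<forall>j\<in>D. 0 \<le> Y $ j) \<and> 0 < Y $ k"
    using minimal_face_direction[OF min] unfolding D_def by blast
  from bchoice[OF this] obtain f where "\<forall>k\<in>D. f k \<in> nfrak X \<and>
      (\<forall>j. j \<notin> tight X lam \<mu> \<longrightarrow> f k $ j = 0) \<and> (\<forall>j\<in>D. 0 \<le> f k $ j) \<and> 0 < f k $ k"
    by blast
  then have f: "\<And>k. k \<in> D \<Longrightarrow> f k \<in> nfrak X"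
    "\<And>k j. k \<in> D \<Longrightarrow> j \<notin> tight X lam \<mu> \<Longrightarrow> f k $ j = 0"
    "\<And>k j. k \<in> D \<Longrightarrow> j \<in> D \<Longrightarrow> 0 \<le> f k $ j" "\<And>k. k \<in> D \<Longrightarrow> 0 < f k $ k"
    by blast+
  have "sum f D \<in> nfrak X" using f(1) by (intro subspace_sum[OF subspace_nfrak]) blast
  moreover have "sum f D $ j = 0" if "j \<notin> tight X lam \<mu>" for j
    using f(2) that by (simp add: sum_component)
  moreover have "0 < sum f D $ j" if j: "j \<in> D" for j
  proof -
    have "sum f D $ j = f j $ j + (\<Sum>k\<in>D - {j}. f k $ j)"
      using j by (simp add: sum_component sum.remove)
    moreover have "0 \<le> (\<Sum>k\<in>D - {j}. f k $ j)" using f(3) j by (intro sum_nonneg) blast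
    ultimately show ?thesis using f(4)[OF j] by linarith
  qed
  ultimately show ?thesis using that unfolding D_def by blast
qed


section \<open>Closed orbits\<close>

text \<open>Flowing along the direction of \<open>minimal_face_flow\<close> kills exactly the coordinates of \<open>z\<close>
  indexed by the minimal face: the truncation of \<open>z\<close> to that face lies in the orbit closure.\<close>
lemma minimal_face_truncate_in_closure:
  fixes X :: "'d::finite \<Rightarrow> real ^ 'n::finite"
  assumes min: "minimal_face_point X lam (zeros z) \<mu>"
  shows "truncate (tight X lam \<mu>) z \<in> closure (orbit X z)"
proof -
  define I where "I = tight X lam \<mu>"
  obtain Y where Y: "Y \<in> nfrak X" "\<And>j. j \<notin> I \<Longrightarrow> Y $ j = 0"
    "\<And>j. j \<in> I - zeros z \<Longrightarrow> 0 < Y $ j"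
    using minimal_face_flow[OF min] unfolding I_def by blast
  have "(\<lambda>k. act (real k *\<^sub>R Y) z) \<longlonglongrightarrow> truncate I z"
  proof (rule vec_tendstoI)
    fix j
    have act_k: "act (real k *\<^sub>R Y) z $ j = complex_of_real (exp (- 2 * pi * Y $ j) ^ k) * z $ j" for k
      by (simp add: act_nth mult.left_commute flip: exp_of_nat_mult)
    show "(\<lambda>k. act (real k *\<^sub>R Y) z $ j) \<longlonglongrightarrow> truncate I z $ j"
    proof (cases "j \<in> I - zeros z")
      case True
      then have "exp (- 2 * pi * Y $ j) < 1" using Y(3) by simp
      then have "(\<lambda>k. exp (- 2 * pi * Y $ j) ^ k) \<longlonglongrightarrow> 0" by (intro LIMSEQ_power_zero) simp
      then have "(\<lambda>k. complex_of_real (exp (- 2 * pi * Y $ j) ^ k)) \<longlonglongrightarrow> 0"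
        using tendsto_of_real by fastforce
      then have "(\<lambda>k. complex_of_real (exp (- 2 * pi * Y $ j) ^ k) * z $ j) \<longlonglongrightarrow> 0"
        by (rule tendsto_mult_left_zero)
      then show ?thesis using True unfolding act_k by (simp add: truncate_def)
    next
      case False
      then show ?thesis using Y(2) by (auto simp: act_k truncate_def zeros_def)
    qed
  qed
  moreover have "act (real k *\<^sub>R Y) z \<in> orbit X z" for k
    using Y(1) subspace_scale[OF subspace_nfrak] by (auto simp: orbit_def)
  ultimately show ?thesis unfolding I_def by (meson closure_sequential)
qed

lemma orbit_closed_iff:
  fixes X :: "'d::finite \<Rightarrow> real ^ 'n::finite"
  assumes zC: "z \<in> CdDelta X lam"
  shows "closedin (top_of_set (CdDelta X lam)) (orbit X z) \<longleftrightarrow> is_face_index X lam (zeros z)"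
proof
  assume closed: "closedin (top_of_set (CdDelta X lam)) (orbit X z)"
  obtain \<nu> where "\<nu> \<in> Delta X lam" "zeros z \<subseteq> tight X lam \<nu>" using zC CdDelta_iff by blast
  then obtain \<mu> where min: "minimal_face_point X lam (zeros z) \<mu>" by (rule minimal_face_point_exists)
  define w where "w = truncate (tight X lam \<mu>) z"
  have zw: "zeros w = tight X lam \<mu>"
    using min by (auto simp: w_def zeros_truncate minimal_face_point_def)
  then have "w \<in> CdDelta X lam" using min by (auto simp: CdDelta_iff minimal_face_point_def)
  moreover have "w \<in> closure (orbit X z)"
    unfolding w_def by (rule minimal_face_truncate_in_closure[OF min])
  ultimately have "w \<in> orbit X z" using closed by (auto simp: closedin_subspace_iff)
  then have "tight X lam \<mu> = zeros z" using zeros_orbit zw by blast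
  then show "is_face_index X lam (zeros z)"
    using min by (auto simp: face_index_iff minimal_face_point_def)
next
  assume "is_face_index X lam (zeros z)"
  then obtain \<mu> where mu: "\<mu> \<in> Delta X lam" "tight X lam \<mu> = zeros z" by (auto simp: face_index_iff)
  have "w \<in> orbit X z" if w: "w \<in> CdDelta X lam" "w \<in> closure (orbit X z)" for w
  proof -
    obtain Y where Y: "\<And>k. Y k \<in> nfrak X" "(\<lambda>k. act (Y k) z) \<longlonglongrightarrow> w"
      using closure_orbit_sequence[OF w(2)] by blast
    obtain \<nu> where "\<nu> \<in> Delta X lam" "zeros w \<subseteq> tight X lam \<nu>" using w(1) CdDelta_iff by blast
    then have "zeros w \<subseteq> zeros z" using limit_zeros_in_face[OF Y mu(1)] mu(2) by blast
    then show ?thesis by (rule limit_in_orbit[OF Y])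
  qed
  then show "closedin (top_of_set (CdDelta X lam)) (orbit X z)"
    using orbit_in_CdDelta[OF zC] by (auto simp: closedin_subspace_iff)
qed

text \<open>Second statement: the closure of every orbit in \<open>\<complex>^d_\<Delta>\<close> contains exactly one closed orbit,
  the orbit of the truncation of \<open>z\<close> to its minimal face.  Any closed orbit \<open>A w'\<close> in the closure
  has a face index as zero set, which lies between \<open>zeros z\<close> and the minimal face index, hence
  equals the latter by minimality; then \<open>w'\<close> is in the orbit of that truncation.\<close>
lemma unique_closed_orbit_in_closure:
  fixes X :: "'d::finite \<Rightarrow> real ^ 'n::finite"
  assumes zC: "z \<in> CdDelta X lam"
  shows "\<exists>!Orb. (\<exists>w \<in> CdDelta X lam. Orb = orbit X w)
                  \<and> closedin (top_of_set (CdDelta X lam)) Orb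
                  \<and> Orb \<subseteq> CdDelta X lam \<inter> closure (orbit X z)"
proof -
  obtain \<nu> where "\<nu> \<in> Delta X lam" "zeros z \<subseteq> tight X lam \<nu>" using zC CdDelta_iff by blast
  then obtain \<mu> where min: "minimal_face_point X lam (zeros z) \<mu>" by (rule minimal_face_point_exists)
  then have mu: "\<mu> \<in> Delta X lam" "zeros z \<subseteq> tight X lam \<mu>" by (auto simp: minimal_face_point_def)
  define I where "I = tight X lam \<mu>"
  define w where "w = truncate I z"
  have zw: "zeros w = I" using mu by (auto simp: w_def I_def zeros_truncate)
  have wC: "w \<in> CdDelta X lam" using zw mu by (auto simp: CdDelta_iff I_def)
  have closed_w: "closedin (top_of_set (CdDelta X lam)) (orbit X w)"
    using orbit_closed_iff[OF wC] zw mu(1) by (auto simp: face_index_iff I_def)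
  have "w \<in> closure (orbit X z)"
    unfolding w_def I_def by (rule minimal_face_truncate_in_closure[OF min])
  then have sub_w: "orbit X w \<subseteq> CdDelta X lam \<inter> closure (orbit X z)"
    using orbit_subset_closure orbit_in_CdDelta[OF wC] by blast
  have "Orb = orbit X w" if w': "w' \<in> CdDelta X lam" "Orb = orbit X w'"
      and closed: "closedin (top_of_set (CdDelta X lam)) Orb"
      and sub: "Orb \<subseteq> CdDelta X lam \<inter> closure (orbit X z)" for Orb w'
  proof -
    have w'_cl: "w' \<in> closure (orbit X z)" using sub w'(2) orbit_refl by blast
    obtain \<nu>' where nu': "\<nu>' \<in> Delta X lam" "tight X lam \<nu>' = zeros w'"
      using orbit_closed_iff[OF w'(1)] closed w'(2) by (auto simp: face_index_iff)
    obtain Y where Y: "\<And>k. Y k \<in> nfrak X" "(\<lambda>k. act (Y k) z) \<longlonglongrightarrow> w'"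
      using closure_orbit_sequence[OF w'_cl] by blast
    have "zeros w' \<subseteq> I" unfolding I_def using limit_zeros_in_face[OF Y mu] nu' by blast
    moreover have "zeros z \<subseteq> zeros w'" by (rule zeros_closure_orbit[OF w'_cl])
    then have "card I \<le> card (tight X lam \<nu>')"
      using min nu' unfolding minimal_face_point_def I_def by blast
    then have "card I \<le> card (zeros w')" using nu'(2) by simp
    ultimately have "zeros w' = I" by (intro card_seteq) auto
    then have "w' \<in> orbit X w" using closure_orbit_truncate[OF w'_cl] by (simp add: w_def)
    then show ?thesis using w'(2) orbit_eq by blast
  qed
  then show ?thesis using wC closed_w sub_w by (intro ex1I[of _ "orbit X w"]) blast+
qed

theorem mainTheorem3:
  fixes X :: "'d::finite \<Rightarrow> real ^ 'n::finite" and lam :: "'d \<Rightarrow> real"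
    and z :: "complex ^ 'd"
  assumes "polytope_presentation X lam"
    and "z \<in> CdDelta X lam"
  shows "(closedin (top_of_set (CdDelta X lam)) (orbit X z) \<longleftrightarrow>
            (\<exists>I. is_face_index X lam I \<and> z \<in> Cstar_compl I))
       \<and> (\<not> closedin (top_of_set (CdDelta X lam)) (orbit X z) \<longrightarrow>
            (\<exists>!Orb. (\<exists>w \<in> CdDelta X lam. Orb = orbit X w)
                  \<and> closedin (top_of_set (CdDelta X lam)) Orb
                  \<and> Orb \<subseteq> CdDelta X lam \<inter> closure (orbit X z)))"
proof -
  have "(\<exists>I. is_face_index X lam I \<and> z \<in> Cstar_compl I) \<longleftrightarrow> is_face_index X lam (zeros z)"
    by (simp add: Cstar_compl_iff)
  then show ?thesis
    using orbit_closed_iff[OF assms(2)] unique_closed_orbit_in_closure[OF assms(2)] by simp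
qed

end
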